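(* There exists a function $f:\mathbb{N}\times\mathbb{N}\to\mathbb{N}$ such that for every $m\in\mathbb{N}$, every $x\in\mathbb{R}^m$ with $|\mathrm{set}(x)|\le r$, and every $\ell\in\mathbb{N}$, there exists $y\in\mathbb{R}^{f(r,\ell)}$ with $D_{(y,\ell)}=D_{(x,\ell)}$ and $\mathrm{set}(x)=\mathrm{set}(y)$, and in particular $d_{dF}(x,q)=d_{dF}(y,q)$ for every $q\in\mathbb{R}^\ell$.
   Context: A time series of complexity $m$ is a vector in $\mathbb{R}^m$; $\mathrm{set}(x)$ is the set of entries of $x$, and $\mathrm{rank}_x(z)$ is the rank of $z\in\mathrm{set}(x)$ in $\mathrm{set}(x)$ (ordered increasingly). For $x\in\mathbb{R}^m$ and $y\in\mathbb{R}^\ell$, a traversal is a sequence of index pairs $(i,j)\in[m]\times[\ell]$ starting at $(1,1)$, ending at $(m,\ell)$, in which each pair $(i,j)$ is followed by one of $(i,j+1)$, $(i+1,j)$, $(i+1,j+1)$; $x_i$ and $y_j$ are matched if $(i,j)$ occurs in it. The discrete Fréchet distance $d_{dF}(x,y)$ is the minimum over all traversals $T$ of $\max_{(i,j)\in T}|x_i-y_j|$. For a traversal $M$ of $x$ with a time series of complexity $\ell$, the traversal sectors are $S^{(x,M)}_j=\{x_i: x_i \text{ matched with the } j\text{-th vertex by } M\}$, $j\in[\ell]$, and the $\ell$-profile of $(x,M)$ is $\big((\mathrm{rank}_x(\min S^{(x,M)}_j),\mathrm{rank}_x(\max S^{(x,M)}_j))\big)_{j=1}^{\ell}$. $D_{(x,\ell)}$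 is the set of all $\ell$-profiles of $(x,M)$ over all such traversals $M$. *)

theory Defs
  imports Complex_Main
begin

text \<open>Time series of complexity m are real lists of length m; indices are 0-based,
  so index i of a list corresponds to index i+1 of the paper.\<close>

definition trav_step :: "nat \<times> nat \<Rightarrow> nat \<times> nat \<Rightarrow> bool" where
  "trav_step p q \<longleftrightarrow> q = (fst p, snd p + 1) \<or> q = (fst p + 1, snd p) \<or> q = (fst p + 1, snd p + 1)"

definition traversal :: "nat \<Rightarrow> nat \<Rightarrow> (nat \<times> nat) list \<Rightarrow> bool" where
  "traversal m l T \<longleftrightarrow> 0 < m \<and> 0 < l \<and> T \<noteq> [] \<and> hd T = (0, 0) \<and> last T = (m - 1, l - 1) \<and>
     (\<forall>k. Suc k < length T \<longrightarrow> trav_step (T ! k) (T ! Suc k))"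

definition dF :: "real list \<Rightarrow> real list \<Rightarrow> real" where
  "dF x y = Inf ((\<lambda>T. Max ((\<lambda>(i, j). \<bar>x ! i - y ! j\<bar>) ` set T)) `
              {T. traversal (length x) (length y) T})"

definition rank :: "real list \<Rightarrow> real \<Rightarrow> nat" where
  "rank x z = card {w \<in> set x. w \<le> z}"

definition sector :: "real list \<Rightarrow> (nat \<times> nat) list \<Rightarrow> nat \<Rightarrow> real set" where
  "sector x M j = {x ! i | i. (i, j) \<in> set M}"

definition profile :: "real list \<Rightarrow> nat \<Rightarrow> (nat \<times> nat) list \<Rightarrow> (nat \<times> nat) list" where
  "profile x l M = map (\<lambda>j. (rank x (Min (sector x M j)), rank x (Max (sector x M j)))) [0..<l]"

definition profiles :: "real list \<Rightarrow> nat \<Rightarrow> (nat \<times> nat) list set" where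
  "profiles x l = {profile x l M | M. traversal (length x) l M}"

end

theory Submission
  imports Defs
begin

(* The cost of a traversal at the j-th vertex of q is attained at the extreme values of the
   j-th sector, and these are recovered from their ranks; hence dF(x, q) depends on x only
   through set(x) and D_(x,l). Both are preserved by strictly monotone relabelling of the
   values and by repeating the first entry. If |set(x)| <= r, the pair (D_(x,l), |set(x)|)
   takes only finitely many values, so f(r,l) can be taken as the largest length of a
   shortest series realising one of them: such a shortest series, relabelled onto set(x)
   and padded by repeating its first entry, is the required y. *)

lemma traversal_iff_successively:
  "traversal m l T \<longleftrightarrow> 0 < m \<and> 0 < l \<and> T \<noteq> [] \<and> hd T = (0, 0) \<and> last T = (m - 1, l - 1) \<and>
     successively trav_step T"
  unfolding traversal_def successively_conv_nth by blast

lemma sorted_wrt_le_last: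
  assumes "reflp P" "sorted_wrt P xs" "x \<in> set xs"
  shows "P x (last xs)"
  using assms(2,3) by (induction xs) (auto simp: reflpD[OF assms(1)])

lemma successively_hits_intermediate:
  fixes g :: "'a \<Rightarrow> nat"
  assumes "successively (\<lambda>p q. g q \<le> g p + 1) xs" "xs \<noteq> []" "g (hd xs) \<le> j" "j \<le> g (last xs)"
  shows "\<exists>p\<in>set xs. g p = j"
  using assms
proof (induction xs)
  case (Cons a xs)
  show ?case
  proof (cases "g a = j")
    case False
    with Cons.prems have "xs \<noteq> []" "successively (\<lambda>p q. g q \<le> g p + 1) xs" "g (hd xs) \<le> j"
      by (auto simp: successively_Cons)
    with Cons.IH Cons.prems(4) show ?thesis by auto
  qed simp
qed simp

lemma traversal_bounds:
  assumes "traversal m l T" "(i, j) \<in> set T"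
  shows "i < m \<and> j < l"
proof -
  let ?le = "\<lambda>p q :: nat \<times> nat. fst p \<le> fst q \<and> snd p \<le> snd q"
  have steps: "successively trav_step T"
    using assms(1) by (simp add: traversal_iff_successively)
  have "successively ?le T"
    by (rule successively_mono[OF steps]) (auto simp: trav_step_def)
  moreover have "transp ?le" by (auto simp: transp_def)
  ultimately have "sorted_wrt ?le T"
    using successively_conv_sorted_wrt by blast
  then have "?le (i, j) (last T)"
    using assms(2) by (rule sorted_wrt_le_last[rotated]) (simp add: reflp_def)
  with assms(1) show ?thesis by (auto simp: traversal_iff_successively)
qed

lemma traversal_hits_column:
  assumes "traversal m l T" "j < l"
  obtains i where "(i, j) \<in> set T"
proof -
  have steps: "successively trav_step T"
    using assms(1) by (simp add: traversal_iff_successively)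
  have "successively (\<lambda>p q. snd q \<le> snd p + 1) T"
    by (rule successively_mono[OF steps]) (auto simp: trav_step_def)
  then have "\<exists>p\<in>set T. snd p = j"
    using assms by (intro successively_hits_intermediate) (auto simp: traversal_iff_successively)
  then show thesis by (metis prod.collapse that)
qed

lemma sector_eq_image: "sector x M j = (\<lambda>i. x ! i) ` {i. (i, j) \<in> set M}"
  unfolding sector_def by blast

lemma sector_cong: "set M = set M' \<Longrightarrow> sector x M j = sector x M' j"
  unfolding sector_def by simp

lemma finite_sector: "finite (sector x M j)"
proof -
  have "sector x M j = (\<lambda>p. x ! fst p) ` {p \<in> set M. snd p = j}"
    unfolding sector_def by force
  then show ?thesis by simp
qed

lemma sector_subset_set:
  assumes "traversal (length x) l M"
  shows "sector x M j \<subseteq> set x"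
  using traversal_bounds[OF assms] unfolding sector_def by auto

lemma sector_nonempty:
  assumes "traversal (length x) l M" "j < l"
  shows "sector x M j \<noteq> {}"
  using traversal_hits_column[OF assms] unfolding sector_def by blast

lemma rank_strict_mono_on: "strict_mono_on (set x) (rank x)"
proof (rule strict_mono_onI)
  fix a b assume "a \<in> set x" "b \<in> set x" "a < b"
  then have "{w \<in> set x. w \<le> a} \<subseteq> {w \<in> set x. w \<le> b}"
    and "b \<in> {w \<in> set x. w \<le> b} - {w \<in> set x. w \<le> a}" by auto
  then have "{w \<in> set x. w \<le> a} \<subset> {w \<in> set x. w \<le> b}" by blast
  then show "rank x a < rank x b" unfolding rank_def by (intro psubset_card_mono) auto
qed

lemma bij_betw_rank: "bij_betw (rank x) (set x) {1..card (set x)}"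
proof -
  have inj: "inj_on (rank x) (set x)"
    by (rule strict_mono_on_imp_inj_on[OF rank_strict_mono_on])
  have "rank x z \<in> {1..card (set x)}" if "z \<in> set x" for z
  proof -
    have "z \<in> {w \<in> set x. w \<le> z}" using that by simp
    then have "0 < rank x z" unfolding rank_def by (auto simp: card_gt_0_iff)
    moreover have "rank x z \<le> card (set x)" unfolding rank_def by (intro card_mono) auto
    ultimately show ?thesis by simp
  qed
  then have "rank x ` set x \<subseteq> {1..card (set x)}" by blast
  moreover have "card (rank x ` set x) = card {1..card (set x)}" by (simp add: card_image[OF inj])
  ultimately have "rank x ` set x = {1..card (set x)}" by (intro card_subset_eq) auto
  with inj show ?thesis by (simp add: bij_betw_def)
qed

definition unrank :: "real list \<Rightarrow> nat \<Rightarrow> real" where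
  "unrank x = the_inv_into (set x) (rank x)"

lemma unrank_rank: "z \<in> set x \<Longrightarrow> unrank x (rank x z) = z"
  unfolding unrank_def by (rule the_inv_into_f_f[OF bij_betw_imp_inj_on[OF bij_betw_rank]])

lemma unrank_cong: "set x = set y \<Longrightarrow> unrank x = unrank y"
  unfolding unrank_def rank_def by simp

lemma Max_abs_diff:
  fixes S :: "real set"
  assumes "finite S" "S \<noteq> {}"
  shows "Max ((\<lambda>v. \<bar>v - c\<bar>) ` S) = max \<bar>Min S - c\<bar> \<bar>Max S - c\<bar>"
proof (rule Max_eqI)
  show "finite ((\<lambda>v. \<bar>v - c\<bar>) ` S)" using assms(1) by simp
  show "d \<le> max \<bar>Min S - c\<bar> \<bar>Max S - c\<bar>" if "d \<in> (\<lambda>v. \<bar>v - c\<bar>) ` S" for d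
  proof -
    from that obtain v where "v \<in> S" "d = \<bar>v - c\<bar>" by blast
    moreover from \<open>v \<in> S\<close> assms have "Min S \<le> v" "v \<le> Max S" by auto
    ultimately show ?thesis by linarith
  qed
  have "Min S \<in> S" "Max S \<in> S" using assms by auto
  then show "max \<bar>Min S - c\<bar> \<bar>Max S - c\<bar> \<in> (\<lambda>v. \<bar>v - c\<bar>) ` S"
    by (auto simp: max_def)
qed

lemma Max_UNION:
  assumes "finite I" "I \<noteq> {}" "\<And>i. i \<in> I \<Longrightarrow> finite (A i) \<and> A i \<noteq> {}"
  shows "Max (\<Union>i\<in>I. A i) = Max ((\<lambda>i. Max (A i)) ` I)"
  using assms by (induction I rule: finite_ne_induct) (auto simp: Max_Un)

definition profile_cost :: "real list \<Rightarrow> real list \<Rightarrow> (nat \<times> nat) list \<Rightarrow> real" where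
  "profile_cost x q p =
     Max ((\<lambda>j. max \<bar>unrank x (fst (p ! j)) - q ! j\<bar> \<bar>unrank x (snd (p ! j)) - q ! j\<bar>) ` {..<length q})"

lemma traversal_cost_eq_profile_cost:
  assumes T: "traversal (length x) (length q) T"
  shows "Max ((\<lambda>(i, j). \<bar>x ! i - q ! j\<bar>) ` set T) = profile_cost x q (profile x (length q) T)"
proof -
  let ?l = "length q"
  have "(\<lambda>(i, j). \<bar>x ! i - q ! j\<bar>) ` set T = (\<Union>j<?l. (\<lambda>v. \<bar>v - q ! j\<bar>) ` sector x T j)"
    using traversal_bounds[OF T] unfolding sector_def by fastforce
  also have "Max \<dots> = Max ((\<lambda>j. Max ((\<lambda>v. \<bar>v - q ! j\<bar>) ` sector x T j)) ` {..<?l})"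
  proof (rule Max_UNION)
    show "{..<?l} \<noteq> {}" using T by (auto simp: traversal_iff_successively)
  qed (auto simp: finite_sector sector_nonempty[OF T])
  also have "\<dots> = profile_cost x q (profile x ?l T)"
  proof -
    have "Min (sector x T j) \<in> set x \<and> Max (sector x T j) \<in> set x" if "j < ?l" for j
      using Min_in[OF finite_sector sector_nonempty[OF T that]]
        Max_in[OF finite_sector sector_nonempty[OF T that]] sector_subset_set[OF T] by blast
    then show ?thesis
      unfolding profile_cost_def profile_def
      by (intro arg_cong[where f = Max] image_cong)
        (simp_all add: Max_abs_diff finite_sector sector_nonempty[OF T] unrank_rank)
  qed
  finally show ?thesis .
qed

lemma dF_eq_Inf_profile_cost: "dF x q = Inf (profile_cost x q ` profiles x (length q))"
proof -
  let ?Trav = "{T. traversal (length x) (length q) T}"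
  have "dF x q = Inf ((\<lambda>T. profile_cost x q (profile x (length q) T)) ` ?Trav)"
    unfolding dF_def
    by (intro arg_cong[where f = Inf] image_cong) (simp_all add: traversal_cost_eq_profile_cost)
  also have "\<dots> = Inf (profile_cost x q ` profile x (length q) ` ?Trav)"
    by (simp add: image_image)
  also have "profile x (length q) ` ?Trav = profiles x (length q)"
    unfolding profiles_def by blast
  finally show ?thesis .
qed

lemma dF_eq_if_profiles_eq:
  assumes "set x = set y" "profiles x (length q) = profiles y (length q)"
  shows "dF x q = dF y q"
  using assms unrank_cong[OF assms(1)] by (simp add: dF_eq_Inf_profile_cost profile_cost_def)

lemma mono_on_Min_commute:
  assumes "mono_on A f" "finite A" "A \<noteq> {}"
  shows "f (Min A) = Min (f ` A)"
proof (rule Min_eqI[symmetric])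
  show "finite (f ` A)" "f (Min A) \<in> f ` A" using assms by auto
  show "f (Min A) \<le> y" if "y \<in> f ` A" for y
    using that Min_le[OF assms(2)] mono_onD[OF assms(1) Min_in[OF assms(2,3)]] by blast
qed

lemma mono_on_Max_commute:
  assumes "mono_on A f" "finite A" "A \<noteq> {}"
  shows "f (Max A) = Max (f ` A)"
proof (rule Max_eqI[symmetric])
  show "finite (f ` A)" "f (Max A) \<in> f ` A" using assms by auto
  show "y \<le> f (Max A)" if "y \<in> f ` A" for y
    using that Max_ge[OF assms(2)] mono_onD[OF assms(1) _ Max_in[OF assms(2,3)]] by blast
qed

lemma profile_eqI:
  assumes "set x = set y" "\<And>j. j < l \<Longrightarrow> sector x M j = sector y M' j"
  shows "profile x l M = profile y l M'"
  unfolding profile_def rank_def using assms by simp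

lemma rank_map_strict_mono:
  assumes "strict_mono_on (set x) g" "z \<in> set x"
  shows "rank (map g x) (g z) = rank x z"
proof -
  have "{w \<in> set (map g x). w \<le> g z} = g ` {w \<in> set x. w \<le> z}"
    using strict_mono_on_less_eq[OF assms(1) _ assms(2)] by auto
  moreover have "inj_on g {w \<in> set x. w \<le> z}"
    using strict_mono_on_imp_inj_on[OF assms(1)] by (rule inj_on_subset) auto
  ultimately show ?thesis unfolding rank_def by (simp add: card_image)
qed

lemma profiles_map_strict_mono:
  assumes g: "strict_mono_on (set x) g"
  shows "profiles (map g x) l = profiles x l"
proof -
  have "profile (map g x) l M = profile x l M" if M: "traversal (length x) l M" for M
    unfolding profile_def
  proof (rule map_cong[OF refl])
    fix j assume "j \<in> set [0..<l]"
    then have fin: "finite (sector x M j)" and ne: "sector x M j \<noteq> {}"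
      and sub: "sector x M j \<subseteq> set x"
      using finite_sector sector_nonempty[OF M] sector_subset_set[OF M] by auto
    have "sector (map g x) M j = g ` sector x M j"
      using traversal_bounds[OF M] unfolding sector_def by force
    moreover have "mono_on (sector x M j) g"
      using strict_mono_on_imp_mono_on[OF g] sub by (rule mono_on_subset)
    moreover have "Min (sector x M j) \<in> set x" "Max (sector x M j) \<in> set x"
      using Min_in[OF fin ne] Max_in[OF fin ne] sub by auto
    ultimately show
      "(rank (map g x) (Min (sector (map g x) M j)), rank (map g x) (Max (sector (map g x) M j))) =
       (rank x (Min (sector x M j)), rank x (Max (sector x M j)))"
      using fin ne by (simp add: mono_on_Min_commute[symmetric] mono_on_Max_commute[symmetric]
          rank_map_strict_mono[OF g])
  qed
  then show ?thesis unfolding profiles_def by (metis length_map)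
qed

lemma exists_strict_mono_onto:
  fixes x z :: "real list"
  assumes "card (set z) = card (set x)"
  obtains g where "strict_mono_on (set z) g" "g ` set z = set x"
proof
  let ?g = "unrank x \<circ> rank z"
  have unrank: "bij_betw (unrank x) {1..card (set z)} (set x)"
    unfolding unrank_def assms by (rule bij_betw_the_inv_into[OF bij_betw_rank])
  show "?g ` set z = set x"
    using bij_betw_trans[OF bij_betw_rank unrank] by (simp add: bij_betw_def)
  have rank_g: "rank x (?g w) = rank z w" if "w \<in> set z" for w
    using bij_betw_apply[OF bij_betw_rank that] assms unfolding unrank_def
    by (simp add: f_the_inv_into_f_bij_betw[OF bij_betw_rank])
  have g_in: "?g w \<in> set x" if "w \<in> set z" for w
    using bij_betw_apply[OF bij_betw_trans[OF bij_betw_rank unrank] that] .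
  show "strict_mono_on (set z) ?g"
  proof (rule strict_mono_onI)
    fix a b assume "a \<in> set z" "b \<in> set z" "a < b"
    then have "rank x (?g a) < rank x (?g b)"
      using strict_mono_onD[OF rank_strict_mono_on] rank_g by metis
    then show "?g a < ?g b"
      using strict_mono_on_less[OF rank_strict_mono_on] g_in \<open>a \<in> set z\<close> \<open>b \<in> set z\<close> by blast
  qed
qed

lemma traversal_stutter:
  assumes "traversal m l T"
  shows "traversal (Suc m) l ((0, 0) # map (\<lambda>(i, j). (Suc i, j)) T)"
proof -
  have ne: "T \<noteq> []" and hd: "hd T = (0, 0)" and steps: "successively trav_step T"
    using assms by (auto simp: traversal_iff_successively)
  have "successively trav_step (map (\<lambda>(i, j). (Suc i, j)) T)"
    unfolding successively_map by (rule successively_mono[OF steps]) (auto simp: trav_step_def)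
  moreover have "trav_step (0, 0) (hd (map (\<lambda>(i, j). (Suc i, j)) T))"
    using ne hd by (simp add: hd_map trav_step_def)
  ultimately show ?thesis
    using assms ne by (auto simp: traversal_iff_successively successively_Cons last_map)
qed

lemma traversal_unstutter:
  assumes "0 < m" "traversal (Suc m) l T"
  shows "traversal m l (remdups_adj (map (\<lambda>(i, j). (i - 1, j)) T))"
proof -
  let ?T = "remdups_adj (map (\<lambda>(i, j). (i - 1, j)) T)"
  have steps: "successively trav_step T" and "T \<noteq> []"
    using assms(2) by (auto simp: traversal_iff_successively)
  have "successively (\<lambda>p q. p = q \<or> trav_step p q) (map (\<lambda>(i, j). (i - 1, j)) T)"
    unfolding successively_map
    by (rule successively_mono[OF steps]) (auto simp: trav_step_def split: prod.splits)
  then have "successively (\<lambda>p q. p = q \<or> trav_step p q) ?T"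
    by (rule successively_remdups_adjI)
  moreover have "distinct_adj ?T" by simp
  ultimately have "successively trav_step ?T"
    unfolding distinct_adj_def successively_conv_nth by blast
  with assms \<open>T \<noteq> []\<close> show ?thesis
    by (auto simp: traversal_iff_successively hd_map last_map)
qed

lemma sector_Cons_dup: "sector (a # a # t) M j = sector (a # t) (map (\<lambda>(i, j). (i - 1, j)) M) j"
proof -
  have shift: "(a # a # t) ! i = (a # t) ! (i - 1)" for i by (cases i) auto
  have "{i. (i, j) \<in> set (map (\<lambda>(i, j). (i - 1, j)) M)} = (\<lambda>i. i - 1) ` {i. (i, j) \<in> set M}"
    by force
  then show ?thesis
    by (simp only: sector_eq_image image_image shift)
qed

lemma profiles_Cons_dup: "profiles (a # a # t) l = profiles (a # t) l"
proof (intro equalityI subsetI)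
  fix p assume "p \<in> profiles (a # a # t) l"
  then obtain M where M: "traversal (Suc (length (a # t))) l M" "p = profile (a # a # t) l M"
    unfolding profiles_def by auto
  let ?M = "remdups_adj (map (\<lambda>(i, j). (i - 1, j)) M)"
  have "sector (a # t) ?M j = sector (a # a # t) M j" for j
    unfolding sector_Cons_dup by (rule sector_cong) simp
  then have "profile (a # t) l ?M = p"
    unfolding M(2) by (intro profile_eqI) simp_all
  with traversal_unstutter[OF _ M(1)] show "p \<in> profiles (a # t) l"
    unfolding profiles_def by auto
next
  fix p assume "p \<in> profiles (a # t) l"
  then obtain M where M: "traversal (length (a # t)) l M" "p = profile (a # t) l M"
    unfolding profiles_def by auto
  let ?M = "(0, 0) # map (\<lambda>(i, j). (Suc i, j)) M"
  have "(0, 0) \<in> set M"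
    using M(1) by (metis list.set_sel(1) traversal_iff_successively)
  moreover have "map (\<lambda>(i, j). (i - 1, j)) ?M = (0, 0) # M"
    by (induction M) auto
  ultimately have "set (map (\<lambda>(i, j). (i - 1, j)) ?M) = set M"
    by auto
  then have "sector (a # a # t) ?M j = sector (a # t) M j" for j
    unfolding sector_Cons_dup by (rule sector_cong)
  then have "profile (a # a # t) l ?M = p"
    unfolding M(2) by (intro profile_eqI) simp_all
  with traversal_stutter[OF M(1)] show "p \<in> profiles (a # a # t) l"
    unfolding profiles_def by auto
qed

lemma profiles_Cons_replicate: "profiles (a # replicate n a @ t) l = profiles (a # t) l"
  by (induction n) (simp_all add: profiles_Cons_dup)

lemma exists_padding:
  assumes "y \<noteq> []" "length y \<le> n"
  obtains y' where "length y' = n" "set y' = set y" "profiles y' l = profiles y l"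
proof -
  obtain a t where y: "y = a # t" using assms(1) by (cases y) auto
  let ?y' = "a # replicate (n - length y) a @ t"
  have "length ?y' = n" using assms(2) y by auto
  moreover have "set ?y' = set y" using y by auto
  moreover have "profiles ?y' l = profiles y l" using y by (simp add: profiles_Cons_replicate)
  ultimately show thesis by (rule that)
qed

definition profile_key :: "nat \<Rightarrow> real list \<Rightarrow> (nat \<times> nat) list set \<times> nat" where
  "profile_key l x = (profiles x l, card (set x))"

definition shortest_length :: "nat \<Rightarrow> (nat \<times> nat) list set \<times> nat \<Rightarrow> nat" where
  "shortest_length l k = (LEAST n. \<exists>z. profile_key l z = k \<and> length z = n)"

definition length_bound :: "nat \<Rightarrow> nat \<Rightarrow> nat" where
  "length_bound r l = Max (shortest_length l ` profile_key l ` {x. card (set x) \<le> r})"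

lemma profiles_subset_bounded_lists:
  assumes "card (set x) \<le> r"
  shows "profiles x l \<subseteq> {p. set p \<subseteq> {0..r} \<times> {0..r} \<and> length p = l}"
proof -
  have "rank x z \<le> r" for z
    using assms card_mono[of "set x" "{w \<in> set x. w \<le> z}"] unfolding rank_def by auto
  then show ?thesis unfolding profiles_def profile_def by auto
qed

lemma finite_profile_keys: "finite (profile_key l ` {x. card (set x) \<le> r})"
proof (rule finite_subset)
  let ?P = "{p. set p \<subseteq> {0..r} \<times> {0..r} \<and> length p = l}"
  show "profile_key l ` {x. card (set x) \<le> r} \<subseteq> Pow ?P \<times> {0..r}"
  proof (rule image_subsetI)
    fix x :: "real list" assume "x \<in> {x. card (set x) \<le> r}"
    then show "profile_key l x \<in> Pow ?P \<times> {0..r}"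
      using profiles_subset_bounded_lists[of x r l] by (simp add: profile_key_def)
  qed
  show "finite (Pow ?P \<times> {0..r})"
    by (simp add: finite_lists_length_eq)
qed

lemma exists_short_same_key:
  assumes "card (set x) \<le> r"
  obtains z where "profile_key l z = profile_key l x" "length z \<le> length_bound r l"
proof -
  have "\<exists>n z. profile_key l z = profile_key l x \<and> length z = n" by blast
  from LeastI_ex[OF this] obtain z
    where z: "profile_key l z = profile_key l x" "length z = shortest_length l (profile_key l x)"
    unfolding shortest_length_def by blast
  have "length z \<le> length_bound r l"
    unfolding length_bound_def z(2) using assms by (intro Max_ge finite_imageI finite_profile_keys) auto
  with z(1) show thesis by (rule that)
qed

lemma exists_short_relabelling:
  assumes "x \<noteq> []" "card (set x) \<le> r"
  obtains y where "y \<noteq> []" "length y \<le> length_bound r l" "set y = set x" "profiles y l = profiles x l"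
proof -
  obtain z where "profile_key l z = profile_key l x" and short: "length z \<le> length_bound r l"
    using exists_short_same_key[OF assms(2)] .
  then have "card (set z) = card (set x)" "profiles z l = profiles x l"
    unfolding profile_key_def by auto
  moreover obtain g where "strict_mono_on (set z) g" "g ` set z = set x"
    using exists_strict_mono_onto[OF \<open>card (set z) = card (set x)\<close>] .
  ultimately have "set (map g z) = set x" "profiles (map g z) l = profiles x l"
    by (simp_all add: profiles_map_strict_mono)
  moreover have "map g z \<noteq> []" using \<open>set (map g z) = set x\<close> assms(1) by auto
  ultimately show thesis using short by (intro that[of "map g z"]) simp_all
qed

theorem lemma4p6:
  shows "\<exists>f :: nat \<Rightarrow> nat \<Rightarrow> nat. \<forall>r (x :: real list) l.
     x \<noteq> [] \<and> card (set x) \<le> r \<longrightarrow>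
     (\<exists>y :: real list. length y = f r l \<and> profiles y l = profiles x l \<and> set x = set y \<and>
        (\<forall>q :: real list. length q = l \<longrightarrow> dF x q = dF y q))"
proof (intro exI[of _ length_bound] allI impI)
  fix r l and x :: "real list"
  assume "x \<noteq> [] \<and> card (set x) \<le> r"
  then obtain y0 where "y0 \<noteq> []" "length y0 \<le> length_bound r l"
    "set y0 = set x" "profiles y0 l = profiles x l"
    using exists_short_relabelling by blast
  then obtain y where y: "length y = length_bound r l" "set y = set x" "profiles y l = profiles x l"
    using exists_padding by metis
  moreover have "dF x q = dF y q" if "length q = l" for q
    using y that by (intro dF_eq_if_profiles_eq) simp_all
  ultimately show "\<exists>y. length y = length_bound r l \<and> profiles y l = profiles x l \<and> set x = set y \<and>
      (\<forall>q. length q = l \<longrightarrow> dF x q = dF y q)"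
    by auto
qed

end
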